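(* Let $f:[0,1]\to\mathbb R$ satisfy $|f(x')-f(x'')|\le H|x'-x''|^{1/N}$, let $X^*$ be the set of global minimizers of $f$ on $[0,1]$, apply PLT indefinitely (stopping rule disregarded) with $p(l)\le Q<\infty$ for all $l>1$, and let $\{x^q\}$ be the trial sequence. Suppose that for every $x^*\in X^*$ the condition of Theorem 2 holds, i.e. there is an infinite set of iteration numbers $\{h\}=\{h(x^* )\}$ such that for all $l\in\{h\}$, with $j=j(l)$ the index of an interval $[x_{j-1},x_j]$ containing $x^*$, one has $4^{1-1/N}K_j^2\ge M_j^2$ and $r\mu_j\ge 2^{1-1/N}K_j+(4^{1-1/N}K_j^2-M_j^2)^{1/2}$, where $K_j=\max\{(z_{j-1}-f(x^* ))(x^*-x_{j-1})^{-1/N},(z_j-f(x^* ))(x_j-x^* )^{-1/N}\}$ and $M_j=|z_{j-1}-z_j|(x_j-x_{j-1})^{-1/N}$. Then the set of limit points of $\{x^q\}$ coincides with $X^*$.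
   Context: Algorithm PLT (parallel information algorithm with local tuning) for minimizing $f$ on $[0,1]$; parameters: integer $N\ge1$, reliability parameter $r>1$, small number $\xi>0$. A "trial" is an evaluation of $f$ at a point. Step 0: perform $q(1)>1$ initial trials at $x^1=0$, $x^2=1$ and some interior points $x^3,\dots,x^{q(1)}\in(0,1)$; set $l=1$. At iteration $l$, let $q=q(l)$ be the number of trials made so far. Step 1: order all trial points as $0=x_1<x_2<\dots<x_q=1$ and set $z_i=f(x_i)$. Step 2: for $2\le j\le q$ compute $\mu_j=\max\{\lambda_j,\gamma_j,\xi\}$, where $\lambda_j=\max\{|z_i-z_{i-1}|/(x_i-x_{i-1})^{1/N}: i\in I_j\}$ with $I_2=\{2,3\}$, $I_j=\{j-1,j,j+1\}$ for $3\le j\le q-1$, $I_q=\{q-1,q\}$; and $\gamma_j=\mu\,(x_j-x_{j-1})^{1/N}/(X^{\max})^{1/N}$ with $\mu=\max\{|z_i-z_{i-1}|/(x_i-x_{i-1})^{1/N}:2\le i\le q\}$ and $X^{\max}=\max\{x_i-x_{i-1}:2\le i\le q\}$. Step 3: for $2\le j\le q$ compute the characteristic $R(j)=r\mu_j(x_j-x_{j-1})^{1/N}+\frac{(z_j-z_{j-1})^2}{r\mu_j(x_j-x_{j-1})^{1/N}}-(z_j+z_{j-1})$. Step 4: choose $p=p(l+1)\le q(l)-1$ and distinct indices $t_1,\dots,t_p$ being the indices of the $p$ largest characteristics ($t_1=\arg\max\{R(i):1<i\le q\}$, $t_k=\arg\max\{R(i):1<i\le q,\ i\ne t_s, 1\le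 s\le k-1\}$); the new trial points are $x^{q+k}=\tfrac12(x_{t_k-1}+x_{t_k})-\frac{1}{2r}\left(\frac{|z_{t_k}-z_{t_k-1}|}{\mu_{t_k}}\right)^N\operatorname{sign}(z_{t_k}-z_{t_k-1})$, $1\le k\le p$. Step 5: evaluate $f$ at these $p$ points in parallel, set $q(l+1)=q(l)+p(l+1)$, $l\leftarrow l+1$, and return to Step 1. *)

theory Defs
  imports Complex_Main
begin

text \<open>Algorithm PLT. A sorted list ys of the current trial points is used with
  1-based indexing: x_i = pt ys i, i = 1..q, q = length ys.\<close>

definition pt :: "real list \<Rightarrow> nat \<Rightarrow> real" where
  "pt ys i = ys ! (i - 1)"

definition sorted_trials :: "(nat \<Rightarrow> real) \<Rightarrow> nat \<Rightarrow> real list" where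
  "sorted_trials xs q = sorted_list_of_set (xs ` {1..q})"

definition slope :: "(real \<Rightarrow> real) \<Rightarrow> nat \<Rightarrow> real list \<Rightarrow> nat \<Rightarrow> real" where
  "slope f N ys i = \<bar>f (pt ys i) - f (pt ys (i - 1))\<bar> / (pt ys i - pt ys (i - 1)) powr (1 / real N)"

text \<open>I_j = {j-1,j,j+1} restricted to the valid indices 2..q
  (gives I_2 = {2,3}, I_q = {q-1,q} for q >= 3).\<close>
definition Ind :: "real list \<Rightarrow> nat \<Rightarrow> nat set" where
  "Ind ys j = {j - 1 .. j + 1} \<inter> {2 .. length ys}"

definition lam :: "(real \<Rightarrow> real) \<Rightarrow> nat \<Rightarrow> real list \<Rightarrow> nat \<Rightarrow> real" where
  "lam f N ys j = Max (slope f N ys ` Ind ys j)"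

definition mumax :: "(real \<Rightarrow> real) \<Rightarrow> nat \<Rightarrow> real list \<Rightarrow> real" where
  "mumax f N ys = Max (slope f N ys ` {2 .. length ys})"

definition Xmax :: "real list \<Rightarrow> real" where
  "Xmax ys = Max ((\<lambda>i. pt ys i - pt ys (i - 1)) ` {2 .. length ys})"

definition gam :: "(real \<Rightarrow> real) \<Rightarrow> nat \<Rightarrow> real list \<Rightarrow> nat \<Rightarrow> real" where
  "gam f N ys j = mumax f N ys * (pt ys j - pt ys (j - 1)) powr (1 / real N)
                   / (Xmax ys) powr (1 / real N)"

definition muj :: "(real \<Rightarrow> real) \<Rightarrow> nat \<Rightarrow> real \<Rightarrow> real list \<Rightarrow> nat \<Rightarrow> real" where
  "muj f N \<xi> ys j = max (max (lam f N ys j) (gam f N ys j)) \<xi>"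

definition charR :: "(real \<Rightarrow> real) \<Rightarrow> nat \<Rightarrow> real \<Rightarrow> real \<Rightarrow> real list \<Rightarrow> nat \<Rightarrow> real" where
  "charR f N r \<xi> ys j =
     (let d = r * muj f N \<xi> ys j * (pt ys j - pt ys (j - 1)) powr (1 / real N);
          zj = f (pt ys j); zj1 = f (pt ys (j - 1))
      in d + (zj - zj1)\<^sup>2 / d - (zj + zj1))"

definition newpt :: "(real \<Rightarrow> real) \<Rightarrow> nat \<Rightarrow> real \<Rightarrow> real \<Rightarrow> real list \<Rightarrow> nat \<Rightarrow> real" where
  "newpt f N r \<xi> ys t =
     (let zt = f (pt ys t); zt1 = f (pt ys (t - 1))
      in (pt ys (t - 1) + pt ys t) / 2
         - 1 / (2 * r) * (\<bar>zt - zt1\<bar> / muj f N \<xi> ys t) ^ N * sgn (zt - zt1))"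

text \<open>A run of PLT: xs k = x^k (k >= 1) is the trial sequence, q l = q(l) (l >= 1)
  the number of trials made before iteration l, p l = p(l) (l >= 2).
  All choices left open by the algorithm (initial interior points, p(l+1),
  tie-breaking among equal characteristics) are existentially free.\<close>
definition PLT_run ::
  "(real \<Rightarrow> real) \<Rightarrow> nat \<Rightarrow> real \<Rightarrow> real \<Rightarrow> nat \<Rightarrow>
   (nat \<Rightarrow> real) \<Rightarrow> (nat \<Rightarrow> nat) \<Rightarrow> (nat \<Rightarrow> nat) \<Rightarrow> bool" where
  "PLT_run f N r \<xi> Q xs q p \<longleftrightarrow>
     q 1 > 1 \<and> xs 1 = 0 \<and> xs 2 = 1 \<and>
     (\<forall>k \<in> {3 .. q 1}. 0 < xs k \<and> xs k < 1) \<and> inj_on xs {1 .. q 1} \<and>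
     (\<forall>l \<ge> 1.
        let ys = sorted_trials xs (q l) in
        1 \<le> p (l + 1) \<and> p (l + 1) \<le> q l - 1 \<and> p (l + 1) \<le> Q \<and>
        q (l + 1) = q l + p (l + 1) \<and>
        (\<exists>t :: nat \<Rightarrow> nat. \<forall>k \<in> {1 .. p (l + 1)}.
            t k \<in> {2 .. q l} \<and> t k \<notin> t ` {1 ..< k} \<and>
            (\<forall>i \<in> {2 .. q l}. i \<notin> t ` {1 ..< k} \<longrightarrow>
                charR f N r \<xi> ys i \<le> charR f N r \<xi> ys (t k)) \<and>
            xs (q l + k) = newpt f N r \<xi> ys (t k)))"

definition Kj :: "(real \<Rightarrow> real) \<Rightarrow> nat \<Rightarrow> real list \<Rightarrow> real \<Rightarrow> nat \<Rightarrow> real" where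
  "Kj f N ys xstar j =
     max ((f (pt ys (j - 1)) - f xstar) * (xstar - pt ys (j - 1)) powr (- (1 / real N)))
         ((f (pt ys j) - f xstar) * (pt ys j - xstar) powr (- (1 / real N)))"

definition Mj :: "(real \<Rightarrow> real) \<Rightarrow> nat \<Rightarrow> real list \<Rightarrow> nat \<Rightarrow> real" where
  "Mj f N ys j = \<bar>f (pt ys (j - 1)) - f (pt ys j)\<bar> * (pt ys j - pt ys (j - 1)) powr (- (1 / real N))"

definition global_minimizers :: "(real \<Rightarrow> real) \<Rightarrow> real set" where
  "global_minimizers f = {x \<in> {0..1}. \<forall>y \<in> {0..1}. f x \<le> f y}"

definition limit_points :: "(nat \<Rightarrow> real) \<Rightarrow> real set" where
  "limit_points xs = {y. \<exists>\<sigma>. strict_mono \<sigma> \<and> (xs \<circ> \<sigma>) \<longlonglongrightarrow> y}"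

end

theory Submission
  imports Defs "HOL-Analysis.Analysis"
begin

text \<open>
  Write \<open>e = 1/N\<close>, \<open>\<mu>\<^sub>0 = max H \<xi>\<close> (an upper bound for every \<open>\<mu>\<^sub>j\<close>) and call
  \<open>x\<^sub>j - x\<^sub>j\<^sub>-\<^sub>1\<close> the width of the \<open>j\<close>-th interval.  Three estimates carry the proof:
  (a) every characteristic satisfies \<open>-2 z\<^sub>j \<le> R(j) \<le> 2 r \<mu>\<^sub>0 width\<^sup>e - z\<^sub>j - z\<^sub>j\<^sub>-\<^sub>1\<close>;
  (b) under the condition of Theorem 2 the interval containing a minimiser \<open>x\<^sup>*\<close>
      has \<open>R(j) \<ge> -2 f(x\<^sup>*) + r \<xi>/2 width\<^sup>e\<close> (concavity of \<open>t \<mapsto> t\<^sup>e\<close> plus a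
      quadratic inequality);
  (c) a new trial splits its interval with margin \<open>(1-1/r)/2\<close> on both sides, so by
      a pigeonhole argument only finitely many iterations select an interval of
      width \<open>\<ge> \<eta>\<close>, for every \<open>\<eta> > 0\<close>.
  If a minimiser were isolated from the trials, (a) and (b) would force the
  selected intervals to stay wide, contradicting (c).  Conversely, once \<open>Q + 1\<close>
  trials lie near a minimiser, at most \<open>Q - 1\<close> intervals are selected before any
  selection, so an interval ending at one of these trials is always available and
  every selected characteristic stays above \<open>-2 f(x\<^sup>*) - \<delta>/2\<close>; near a non-minimal
  limit point this again forces wide selected intervals, contradicting (c).
\<close>

definition theorem2_condition ::
  "(real \<Rightarrow> real) \<Rightarrow> nat \<Rightarrow> real \<Rightarrow> real \<Rightarrow> (nat \<Rightarrow> real) \<Rightarrow> (nat \<Rightarrow> nat) \<Rightarrow> real \<Rightarrow> bool"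
where
  "theorem2_condition f N r \<xi> xs q xstar \<longleftrightarrow> (\<exists>Hs :: nat set.
     infinite Hs \<and> (\<forall>l \<in> Hs. l \<ge> 1 \<and>
       (let ys = sorted_trials xs (q l) in
        \<exists>j \<in> {2 .. q l}. pt ys (j - 1) \<le> xstar \<and> xstar \<le> pt ys j \<and>
          4 powr (1 - 1 / real N) * (Kj f N ys xstar j)\<^sup>2 \<ge> (Mj f N ys j)\<^sup>2 \<and>
          r * muj f N \<xi> ys j \<ge> 2 powr (1 - 1 / real N) * Kj f N ys xstar j
            + sqrt (4 powr (1 - 1 / real N) * (Kj f N ys xstar j)\<^sup>2 - (Mj f N ys j)\<^sup>2))))"


subsection \<open>Real-analytic inequalities\<close>

text \<open>Concavity of \<open>t \<mapsto> t powr e\<close> for \<open>0 < e \<le> 1\<close>, in the form used for an interval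
  split at an interior point; derived from Young's inequality.\<close>
lemma powr_sum_le_concave:
  fixes u v e :: real
  assumes "0 \<le> u" "0 \<le> v" "0 < e" "e \<le> 1"
  shows "u powr e + v powr e \<le> 2 powr (1 - e) * (u + v) powr e"
proof (cases "u = 0 \<or> v = 0")
  case True
  have "1 \<le> 2 powr (1 - e)" using assms by (simp add: ge_one_powr_ge_zero)
  then show ?thesis using True assms by (auto simp: mult_le_cancel_right1)
next
  case False
  then have up: "u > 0" and vp: "v > 0" using assms by auto
  define m where "m = (u + v) / 2"
  have mp: "m > 0" using up vp m_def by simp
  have "(u/m) powr e * 1 powr (1-e) \<le> e * (u/m) + (1-e) * 1"
    by (rule Youngs_inequality_0) (use assms up mp in auto)
  moreover have "(v/m) powr e * 1 powr (1-e) \<le> e * (v/m) + (1-e) * 1"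
    by (rule Youngs_inequality_0) (use assms vp mp in auto)
  moreover have "e * (u/m) + e * (v/m) = e * ((u + v) / m)"
    by (simp add: add_divide_distrib ring_distribs)
  moreover have "(u + v) / m = 2" using mp unfolding m_def by (simp add: field_simps)
  ultimately have "(u/m) powr e + (v/m) powr e \<le> 2" by simp
  then have "(u powr e + v powr e) / m powr e \<le> 2"
    using up vp mp by (simp add: powr_divide add_divide_distrib)
  then have "u powr e + v powr e \<le> 2 * m powr e" using mp by (simp add: pos_divide_le_eq)
  also have "m powr e = (u + v) powr e / 2 powr e"
    unfolding m_def using up vp by (simp add: powr_divide)
  also have "2 * ((u + v) powr e / 2 powr e) = 2 powr (1 - e) * (u + v) powr e"
    by (simp add: powr_diff)
  finally show ?thesis .
qed

text \<open>The algebraic heart of Theorem 2: if \<open>T\<close> exceeds the larger root of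
  \<open>T\<^sup>2 - 2cKT + M\<^sup>2 = 0\<close>, then \<open>T + M\<^sup>2/T - cK\<close> is at least \<open>T/2\<close>.\<close>
lemma quadratic_margin:
  fixes T c K M :: real
  assumes T: "T > 0" and disc: "M\<^sup>2 \<le> c\<^sup>2 * K\<^sup>2"
    and big: "c * K + sqrt (c\<^sup>2 * K\<^sup>2 - M\<^sup>2) \<le> T"
  shows "T / 2 \<le> T + M\<^sup>2 / T - c * K"
proof -
  define u where "u = T - c * K"
  have s0: "0 \<le> sqrt (c\<^sup>2 * K\<^sup>2 - M\<^sup>2)" using disc by simp
  have us: "sqrt (c\<^sup>2 * K\<^sup>2 - M\<^sup>2) \<le> u" using big unfolding u_def by simp
  have "c\<^sup>2 * K\<^sup>2 - M\<^sup>2 \<le> u\<^sup>2" using power_mono[OF us s0, of 2] disc by simp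
  then have "T * (T - 2 * u) \<le> M\<^sup>2" unfolding u_def by (simp add: algebra_simps power2_eq_square)
  then have "T - 2 * u \<le> M\<^sup>2 / T" using T by (simp add: pos_le_divide_eq mult.commute)
  moreover have "0 \<le> M\<^sup>2 / T" using T by simp
  moreover have "0 \<le> u" using us s0 by linarith
  ultimately have "T / 2 \<le> u + M\<^sup>2 / T" by linarith
  then show ?thesis unfolding u_def by simp
qed

lemma le_powr_root:
  fixes v D :: real
  assumes N: "N \<ge> 1" and v: "0 < v" and D: "0 < D" and le: "v \<le> D powr (1 / real N)"
  shows "v powr real N \<le> D"
proof -
  have "v powr real N \<le> (D powr (1 / real N)) powr real N" using le v by (intro powr_mono2) auto
  also have "\<dots> = D" using N D by (simp add: powr_powr)
  finally show ?thesis .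
qed

lemma hoelder_uniform:
  fixes f :: "real \<Rightarrow> real"
  assumes N: "N \<ge> 1" and eps: "\<epsilon> > 0"
    and hoelder: "\<forall>x \<in> S. \<forall>z \<in> S. \<bar>f x - f z\<bar> \<le> H * \<bar>x - z\<bar> powr (1 / real N)"
  shows "\<exists>\<rho> > 0. \<forall>x \<in> S. \<forall>z \<in> S. \<bar>x - z\<bar> < \<rho> \<longrightarrow> \<bar>f x - f z\<bar> \<le> \<epsilon>"
proof (cases "H \<le> 0")
  case True
  have "\<bar>f x - f z\<bar> \<le> \<epsilon>" if "x \<in> S" "z \<in> S" for x z
  proof -
    have "\<bar>f x - f z\<bar> \<le> H * \<bar>x - z\<bar> powr (1 / real N)" using hoelder that by blast
    also have "\<dots> \<le> 0" using True by (simp add: mult_nonpos_nonneg)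
    finally show ?thesis using eps by simp
  qed
  then show ?thesis by (intro exI[of _ 1]) auto
next
  case False
  then have Hp: "H > 0" by simp
  define \<rho> where "\<rho> = (\<epsilon> / H) powr real N"
  have "\<bar>f x - f z\<bar> \<le> \<epsilon>" if "x \<in> S" "z \<in> S" "\<bar>x - z\<bar> < \<rho>" for x z
  proof -
    have "\<bar>f x - f z\<bar> \<le> H * \<bar>x - z\<bar> powr (1 / real N)" using hoelder that by blast
    also have "\<bar>x - z\<bar> powr (1 / real N) \<le> \<rho> powr (1 / real N)"
      using that(3) by (intro powr_mono2) auto
    also have "\<rho> powr (1 / real N) = \<epsilon> / H" unfolding \<rho>_def using N eps Hp by (simp add: powr_powr)
    finally show ?thesis using Hp by (simp add: mult_left_mono)
  qed
  moreover have "\<rho> > 0" unfolding \<rho>_def using eps Hp by simp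
  ultimately show ?thesis by blast
qed

lemma hoelder_minimizer_exists:
  fixes f :: "real \<Rightarrow> real"
  assumes N: "N \<ge> 1"
    and hoelder: "\<forall>x \<in> {0..1}. \<forall>z \<in> {0..1}. \<bar>f x - f z\<bar> \<le> H * \<bar>x - z\<bar> powr (1 / real N)"
  obtains xstar where "xstar \<in> global_minimizers f"
proof -
  have "uniformly_continuous_on {0..1} f"
    unfolding uniformly_continuous_on_def
  proof (intro allI impI)
    fix \<epsilon> :: real assume eps: "\<epsilon> > 0"
    then obtain \<rho> where "\<rho> > 0"
      and U: "\<forall>x \<in> {0..1}. \<forall>z \<in> {0..1}. \<bar>x - z\<bar> < \<rho> \<longrightarrow> \<bar>f x - f z\<bar> \<le> \<epsilon> / 2"
      using hoelder_uniform[OF N _ hoelder, of "\<epsilon> / 2"] by auto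
    then show "\<exists>d > 0. \<forall>x \<in> {0..1}. \<forall>x' \<in> {0..1}. dist x' x < d \<longrightarrow> dist (f x') (f x) < \<epsilon>"
      using eps by (intro exI[of _ \<rho>]) (force simp: dist_real_def)
  qed
  then have "continuous_on {0..1} f" by (rule uniformly_continuous_imp_continuous)
  then obtain x where "x \<in> {0..1}" "\<forall>y \<in> {0..1}. f x \<le> f y"
    using continuous_attains_inf[of "{0..1}" f] by auto
  then show ?thesis using that unfolding global_minimizers_def by blast
qed

lemma floor_eq_close:
  fixes x y h :: real
  assumes eq: "\<lfloor>x / h\<rfloor> = \<lfloor>y / h\<rfloor>" and h: "h > 0"
  shows "\<bar>x - y\<bar> < h"
proof -
  have "real_of_int \<lfloor>x / h\<rfloor> = real_of_int \<lfloor>y / h\<rfloor>" using eq by simp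
  then have "\<bar>x / h - y / h\<bar> < 1"
    using floor_correct[of "x / h"] floor_correct[of "y / h"] unfolding abs_less_iff by linarith
  then have "\<bar>x - y\<bar> / h < 1" using h by (simp add: abs_divide diff_divide_distrib[symmetric])
  then show ?thesis using h by (simp add: pos_divide_less_eq)
qed

lemma crossing_index:
  fixes g :: "nat \<Rightarrow> nat"
  assumes "a \<le> b" "g a < n" "n \<le> g b"
  shows "\<exists>l. a \<le> l \<and> l < b \<and> g l < n \<and> n \<le> g (Suc l)"
  using assms(1,3)
proof (induction b rule: dec_induct)
  case base then show ?case using assms(2) by simp
next
  case (step m)
  show ?case
  proof (cases "n \<le> g m")
    case True then show ?thesis using step by (meson less_SucI)
  next
    case False then show ?thesis using step by (intro exI[of _ m]) auto
  qed
qed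


lemma limit_point_infinitely_often:
  assumes "y \<in> limit_points xs" "\<epsilon> > 0"
  shows "infinite {n. \<bar>xs n - y\<bar> < \<epsilon>}"
proof -
  obtain \<sigma> where s: "strict_mono \<sigma>" "(xs \<circ> \<sigma>) \<longlonglongrightarrow> y"
    using assms(1) unfolding limit_points_def by blast
  then obtain M where M: "\<forall>m \<ge> M. dist ((xs \<circ> \<sigma>) m) y < \<epsilon>"
    using assms(2) LIMSEQ_def by metis
  have "\<sigma> ` {M..} \<subseteq> {n. \<bar>xs n - y\<bar> < \<epsilon>}" using M by (auto simp: dist_real_def)
  moreover have "infinite (\<sigma> ` {M..})"
    using s(1) by (simp add: finite_image_iff strict_mono_imp_inj_on infinite_Ici)
  ultimately show ?thesis using finite_subset by blast
qed

lemma limit_point_in_interval: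
  assumes range: "\<forall>n \<ge> 1. xs n \<in> {a..b}" and y: "y \<in> limit_points xs"
  shows "y \<in> {a..b}"
proof -
  obtain \<sigma> where s: "strict_mono \<sigma>" "(xs \<circ> \<sigma>) \<longlonglongrightarrow> y"
    using y unfolding limit_points_def by blast
  have ev: "(xs \<circ> \<sigma>) m \<in> {a..b}" if "m \<ge> 1" for m
    using range seq_suble[OF s(1), of m] that by simp
  have "a \<le> y" using s(2) by (rule LIMSEQ_le_const) (use ev in auto)
  moreover have "y \<le> b" using s(2) by (rule LIMSEQ_le_const2) (use ev in auto)
  ultimately show ?thesis by simp
qed


lemma sorted_list_pt:
  fixes S :: "real set" assumes fin: "finite S"
  shows "length (sorted_list_of_set S) = card S"
    and "\<And>i j. 1 \<le> i \<Longrightarrow> i < j \<Longrightarrow> j \<le> card S \<Longrightarrow>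
           pt (sorted_list_of_set S) i < pt (sorted_list_of_set S) j"
    and "\<And>i. 1 \<le> i \<Longrightarrow> i \<le> card S \<Longrightarrow> pt (sorted_list_of_set S) i \<in> S"
    and "\<And>s. s \<in> S \<Longrightarrow> \<exists>i. 1 \<le> i \<and> i \<le> card S \<and> pt (sorted_list_of_set S) i = s"
proof -
  let ?ys = "sorted_list_of_set S"
  show len: "length ?ys = card S" by simp
  have ss: "sorted_wrt (<) ?ys" by (rule strict_sorted_list_of_set)
  show "pt ?ys i < pt ?ys j" if "1 \<le> i" "i < j" "j \<le> card S" for i j
    unfolding pt_def using sorted_wrt_nth_less[OF ss, of "i - 1" "j - 1"] that len by simp
  show "pt ?ys i \<in> S" if "1 \<le> i" "i \<le> card S" for i
  proof -
    have "?ys ! (i - 1) \<in> set ?ys" using that len by (intro nth_mem) simp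
    then show ?thesis unfolding pt_def using fin by simp
  qed
  show "\<exists>i. 1 \<le> i \<and> i \<le> card S \<and> pt ?ys i = s" if "s \<in> S" for s
  proof -
    have "s \<in> set ?ys" using that fin by simp
    then obtain m where "m < length ?ys" "?ys ! m = s" by (auto simp: in_set_conv_nth)
    then show ?thesis unfolding pt_def using len by (intro exI[of _ "m + 1"]) auto
  qed
qed


subsection \<open>One step of PLT\<close>

lemma slope_le_muj:
  assumes "2 \<le> t" "t \<le> length ys"
  shows "slope f N ys t \<le> muj f N \<xi> ys t"
proof -
  have "t \<in> Ind ys t" and "finite (Ind ys t)" using assms unfolding Ind_def by auto
  then have "slope f N ys t \<le> lam f N ys t" unfolding lam_def by (intro Max_ge) auto
  then show ?thesis unfolding muj_def by simp
qed

lemma muj_ge_xi: "\<xi> \<le> muj f N \<xi> ys t"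
  unfolding muj_def by simp

lemma increment_le_muj:
  assumes "2 \<le> t" "t \<le> length ys" "pt ys (t - 1) < pt ys t"
  shows "\<bar>f (pt ys t) - f (pt ys (t - 1))\<bar>
           \<le> muj f N \<xi> ys t * (pt ys t - pt ys (t - 1)) powr (1 / real N)"
proof -
  have "(pt ys t - pt ys (t - 1)) powr (1 / real N) > 0" using assms(3) by simp
  then show ?thesis using slope_le_muj[OF assms(1,2), of f N \<xi>]
    unfolding slope_def by (simp add: pos_divide_le_eq)
qed

lemma newpt_inside:
  assumes t: "2 \<le> t" "t \<le> length ys" and ab: "pt ys (t - 1) < pt ys t" and xi: "\<xi> > 0"
    and r: "r > 1" and N: "N \<ge> 1"
  shows "pt ys (t - 1) + (1 - 1/r) / 2 * (pt ys t - pt ys (t - 1)) \<le> newpt f N r \<xi> ys t"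
    and "newpt f N r \<xi> ys t \<le> pt ys t - (1 - 1/r) / 2 * (pt ys t - pt ys (t - 1))"
proof -
  define a where "a = pt ys (t - 1)"
  define b where "b = pt ys t"
  define \<mu> where "\<mu> = muj f N \<xi> ys t"
  define X where "X = \<bar>f b - f a\<bar> / \<mu>"
  have mup: "\<mu> > 0" using muj_ge_xi[of \<xi> f N ys t] xi unfolding \<mu>_def by linarith
  have "\<bar>f b - f a\<bar> \<le> \<mu> * (b - a) powr (1 / real N)"
    using increment_le_muj[OF t ab] unfolding \<mu>_def a_def b_def .
  then have "X \<le> (b - a) powr (1 / real N)"
    unfolding X_def using mup by (simp add: divide_le_eq mult.commute)
  then have "X ^ N \<le> ((b - a) powr (1 / real N)) ^ N"
    unfolding X_def by (intro power_mono) (use mup in auto)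
  also have "\<dots> = b - a" using ab N unfolding a_def b_def by (simp add: powr_power)
  finally have XN: "X ^ N \<le> b - a" .
  define w where "w = 1 / (2 * r) * X ^ N * sgn (f b - f a)"
  have "\<bar>w\<bar> \<le> 1 / (2 * r) * X ^ N"
    unfolding w_def using r mup by (auto simp: abs_mult sgn_real_def X_def)
  also have "\<dots> \<le> 1 / (2 * r) * (b - a)" using XN r by (intro mult_left_mono) auto
  finally have wle: "\<bar>w\<bar> \<le> (b - a) / (2 * r)" by simp
  have np: "newpt f N r \<xi> ys t = (a + b) / 2 - w"
    unfolding newpt_def Let_def w_def X_def \<mu>_def a_def b_def by simp
  have lower: "a + (1 - 1/r) / 2 * (b - a) = (a + b) / 2 - (b - a) / (2 * r)"
    and upper: "b - (1 - 1/r) / 2 * (b - a) = (a + b) / 2 + (b - a) / (2 * r)"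
    using r by (simp_all add: field_simps)
  show "pt ys (t - 1) + (1 - 1/r) / 2 * (pt ys t - pt ys (t - 1)) \<le> newpt f N r \<xi> ys t"
    using lower np wle unfolding a_def[symmetric] b_def[symmetric] by linarith
  show "newpt f N r \<xi> ys t \<le> pt ys t - (1 - 1/r) / 2 * (pt ys t - pt ys (t - 1))"
    using upper np wle unfolding a_def[symmetric] b_def[symmetric] by linarith
qed

lemma charR_bounds:
  assumes t: "2 \<le> t" "t \<le> length ys" and ab: "pt ys (t - 1) < pt ys t" and xi: "\<xi> > 0"
    and r: "r > 1"
  shows "-2 * f (pt ys t) \<le> charR f N r \<xi> ys t"
    and "charR f N r \<xi> ys t \<le> 2 * r * muj f N \<xi> ys t * (pt ys t - pt ys (t - 1)) powr (1 / real N)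
          - f (pt ys t) - f (pt ys (t - 1))"
proof -
  define a where "a = pt ys (t - 1)"
  define b where "b = pt ys t"
  define \<mu> where "\<mu> = muj f N \<xi> ys t"
  define d where "d = r * \<mu> * (b - a) powr (1 / real N)"
  have mup: "\<mu> > 0" using muj_ge_xi[of \<xi> f N ys t] xi unfolding \<mu>_def by linarith
  have dp: "d > 0" unfolding d_def using mup ab r unfolding a_def b_def by simp
  have "\<bar>f b - f a\<bar> \<le> \<mu> * (b - a) powr (1 / real N)"
    using increment_le_muj[OF t ab] unfolding \<mu>_def a_def b_def .
  also have "\<dots> \<le> d" unfolding d_def using mup r by (simp add: mult_le_cancel_right1)
  finally have dzd: "\<bar>f b - f a\<bar> \<le> d" .
  have R: "charR f N r \<xi> ys t = d + (f b - f a)\<^sup>2 / d - (f b + f a)"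
    unfolding charR_def Let_def d_def \<mu>_def a_def b_def by simp
  have "(f b - f a)\<^sup>2 \<le> d\<^sup>2" using dzd dp by (metis abs_le_square_iff abs_of_pos)
  then have "(f b - f a)\<^sup>2 / d \<le> d" using dp by (simp add: divide_le_eq power2_eq_square)
  moreover have "0 \<le> (f b - f a)\<^sup>2 / d" using dp by simp
  ultimately show "-2 * f (pt ys t) \<le> charR f N r \<xi> ys t"
    and "charR f N r \<xi> ys t \<le> 2 * r * muj f N \<xi> ys t * (pt ys t - pt ys (t - 1)) powr (1 / real N)
          - f (pt ys t) - f (pt ys (t - 1))"
    using R dzd unfolding a_def b_def \<mu>_def d_def by linarith+
qed

lemma muj_le_max:
  assumes j: "2 \<le> j" "j \<le> length ys"
    and sl: "\<forall>i \<in> {2..length ys}. slope f N ys i \<le> H"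
    and inc: "\<forall>i \<in> {2..length ys}. pt ys (i - 1) < pt ys i"
  shows "muj f N \<xi> ys j \<le> max H \<xi>"
proof -
  have "lam f N ys j \<le> H" unfolding lam_def using j sl
    by (subst Max_le_iff) (auto simp: Ind_def)
  have ne: "{2..length ys} \<noteq> {}" using j by auto
  have mm: "mumax f N ys \<le> H" unfolding mumax_def using ne sl by (subst Max_le_iff) auto
  have "0 \<le> slope f N ys j" unfolding slope_def by simp
  also have "slope f N ys j \<le> mumax f N ys" unfolding mumax_def using j by (intro Max_ge) auto
  finally have mm0: "0 \<le> mumax f N ys" .
  have Dj: "pt ys j - pt ys (j - 1) > 0" using inc j by auto
  have Xge: "Xmax ys \<ge> pt ys j - pt ys (j - 1)" unfolding Xmax_def using j by (intro Max_ge) auto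
  have "(pt ys j - pt ys (j - 1)) powr (1 / real N) \<le> Xmax ys powr (1 / real N)"
    using Dj Xge by (intro powr_mono2) auto
  moreover have "Xmax ys powr (1 / real N) > 0" using Dj Xge by simp
  ultimately have "(pt ys j - pt ys (j - 1)) powr (1 / real N) / Xmax ys powr (1 / real N) \<le> 1"
    by simp
  then have "mumax f N ys * ((pt ys j - pt ys (j - 1)) powr (1 / real N) / Xmax ys powr (1 / real N))
      \<le> mumax f N ys"
    using mm0 by (rule mult_left_le)
  then have "gam f N ys j \<le> H" unfolding gam_def using mm by simp
  with \<open>lam f N ys j \<le> H\<close> show ?thesis unfolding muj_def by (auto simp: max_def)
qed

lemma excess_le_Kj:
  assumes N: "N \<ge> 1" and x: "pt ys (j - 1) \<le> x" "x \<le> pt ys j"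
    and fa: "f x \<le> f (pt ys (j - 1))" and fb: "f x \<le> f (pt ys j)"
  shows "f (pt ys (j - 1)) + f (pt ys j) - 2 * f x
         \<le> 2 powr (1 - 1 / real N) * Kj f N ys x j * (pt ys j - pt ys (j - 1)) powr (1 / real N)"
proof -
  define a where "a = pt ys (j - 1)"
  define b where "b = pt ys j"
  define e where "e = 1 / real N"
  define K where "K = Kj f N ys x j"
  have e: "0 < e" "e \<le> 1" using N unfolding e_def by auto
  have K: "K = max ((f a - f x) * (x - a) powr (-e)) ((f b - f x) * (b - x) powr (-e))"
    unfolding K_def Kj_def a_def b_def e_def by simp
  have K0: "0 \<le> K" using fa unfolding K a_def by (simp add: le_max_iff_disj)
  have scale: "y \<le> K * s powr e" if "y * s powr (-e) \<le> K" "0 \<le> s" "s = 0 \<Longrightarrow> y = 0" for y s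
  proof (cases "s = 0")
    case True then show ?thesis using that K0 by simp
  next
    case False
    have "y * s powr (-e) * s powr e \<le> K * s powr e" using that(1) by (intro mult_right_mono) auto
    moreover have "s powr (-e) * s powr e = 1" using False that(2) by (simp add: powr_add[symmetric])
    ultimately show ?thesis by (simp add: mult.assoc)
  qed
  have "f a - f x \<le> K * (x - a) powr e" by (rule scale) (use x in \<open>auto simp: K a_def\<close>)
  moreover have "f b - f x \<le> K * (b - x) powr e" by (rule scale) (use x in \<open>auto simp: K b_def\<close>)
  moreover have "(x - a) powr e + (b - x) powr e \<le> 2 powr (1 - e) * (b - a) powr e"
    using powr_sum_le_concave[of "x - a" "b - x" e] x e unfolding a_def b_def by simp
  then have "K * ((x - a) powr e + (b - x) powr e) \<le> K * (2 powr (1 - e) * (b - a) powr e)"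
    using K0 by (rule mult_left_mono)
  ultimately have "f a + f b - 2 * f x \<le> 2 powr (1 - e) * K * (b - a) powr e"
    by (simp add: algebra_simps)
  then show ?thesis unfolding a_def b_def e_def K_def .
qed

lemma charR_ge_at_minimizer:
  assumes N: "N \<ge> 1" and r: "r > 0" and xi: "\<xi> > 0"
    and ab: "pt ys (j - 1) < pt ys j" and x: "pt ys (j - 1) \<le> x" "x \<le> pt ys j"
    and fa: "f x \<le> f (pt ys (j - 1))" and fb: "f x \<le> f (pt ys j)"
    and disc: "(Mj f N ys j)\<^sup>2 \<le> 4 powr (1 - 1 / real N) * (Kj f N ys x j)\<^sup>2"
    and big: "2 powr (1 - 1 / real N) * Kj f N ys x j
              + sqrt (4 powr (1 - 1 / real N) * (Kj f N ys x j)\<^sup>2 - (Mj f N ys j)\<^sup>2)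
              \<le> r * muj f N \<xi> ys j"
  shows "-2 * f x + r * \<xi> / 2 * (pt ys j - pt ys (j - 1)) powr (1 / real N) \<le> charR f N r \<xi> ys j"
proof -
  define a where "a = pt ys (j - 1)"
  define b where "b = pt ys j"
  define e where "e = 1 / real N"
  define c where "c = 2 powr (1 - e)"
  define T where "T = r * muj f N \<xi> ys j"
  define D where "D = (b - a) powr e"
  define K where "K = Kj f N ys x j"
  define M where "M = Mj f N ys j"
  have c2: "c\<^sup>2 = 4 powr (1 - e)" unfolding c_def by (simp add: power2_eq_square powr_mult[symmetric])
  have T: "r * \<xi> \<le> T" unfolding T_def using muj_ge_xi r by simp
  have Tpos: "T > 0" using T r xi by (smt (verit) mult_pos_pos)
  have Dpos: "D > 0" unfolding D_def using ab a_def b_def by simp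
  have MD: "(f b - f a)\<^sup>2 = M\<^sup>2 * D\<^sup>2"
  proof -
    have "(b - a) powr (-e) * (b - a) powr e = 1" using ab a_def b_def by (simp add: powr_add[symmetric])
    then have "M * D = \<bar>f a - f b\<bar>" unfolding M_def Mj_def D_def a_def b_def e_def by (simp add: mult.assoc)
    then show ?thesis by (metis power2_abs power_mult_distrib abs_minus_commute)
  qed
  have margin: "T / 2 \<le> T + M\<^sup>2 / T - c * K"
    using quadratic_margin[OF Tpos, of M c K] disc big c2 unfolding c_def K_def M_def T_def e_def by simp
  have excess: "f a + f b - 2 * f x \<le> c * K * D"
    using excess_le_Kj[OF N x fa fb] unfolding a_def b_def c_def K_def D_def e_def by simp
  have "-2 * f x + r * \<xi> / 2 * D \<le> -2 * f x + T / 2 * D" using T Dpos by (simp add: mult_right_mono)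
  also have "\<dots> \<le> D * (T + M\<^sup>2 / T - c * K) - 2 * f x" using margin Dpos by (simp add: mult.commute)
  also have "\<dots> \<le> D * (T + M\<^sup>2 / T) - (f a + f b)" using excess by (simp add: algebra_simps)
  also have "\<dots> = charR f N r \<xi> ys j"
    using Tpos Dpos MD unfolding charR_def Let_def T_def D_def a_def b_def e_def
    by (simp add: field_simps power2_eq_square)
  finally show ?thesis unfolding D_def a_def b_def e_def .
qed


subsection \<open>A run of PLT\<close>

locale plt_run =
  fixes f :: "real \<Rightarrow> real" and N Q :: nat and r \<xi> H :: real
    and xs :: "nat \<Rightarrow> real" and q p :: "nat \<Rightarrow> nat"
  assumes N: "N \<ge> 1" and r: "r > 1" and xi: "\<xi> > 0"
    and hoelder: "\<forall>x' \<in> {0..1}. \<forall>x'' \<in> {0..1}.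
                    \<bar>f x' - f x''\<bar> \<le> H * \<bar>x' - x''\<bar> powr (1 / real N)"
    and run: "PLT_run f N r \<xi> Q xs q p"
begin

definition "Ys l = sorted_trials xs (q l)"
definition "St l = xs ` {1..q l}"
definition "Rc l i = charR f N r \<xi> (Ys l) i"
definition "Tprop l t \<longleftrightarrow> (\<forall>k \<in> {1..p (l+1)}. t k \<in> {2..q l} \<and> t k \<notin> t ` {1..<k} \<and>
    (\<forall>i \<in> {2..q l}. i \<notin> t ` {1..<k} \<longrightarrow> Rc l i \<le> Rc l (t k)) \<and>
    xs (q l + k) = newpt f N r \<xi> (Ys l) (t k))"
definition "Tt l = (SOME t. Tprop l t)"
definition "lo l k = pt (Ys l) (Tt l k - 1)"
definition "hi l k = pt (Ys l) (Tt l k)"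

definition "\<alpha> = (1 - 1/r) / 2"
definition "mu_bound = max H \<xi>"

lemma alpha_pos: "\<alpha> > 0" unfolding \<alpha>_def using r by simp
lemma mu_bound_pos: "mu_bound > 0" unfolding mu_bound_def using xi by simp

lemma run_start: "q 1 > 1" "xs 1 = 0" "xs 2 = 1" "\<forall>k \<in> {3..q 1}. 0 < xs k \<and> xs k < 1"
  "inj_on xs {1..q 1}"
  using run unfolding PLT_run_def by auto

lemma run_step:
  assumes "l \<ge> 1"
  shows "1 \<le> p (l+1)" "p (l+1) \<le> Q" "q (l+1) = q l + p (l+1)" "Tprop l (Tt l)"
proof -
  have A: "\<forall>l \<ge> 1. 1 \<le> p (l + 1) \<and> p (l + 1) \<le> Q \<and> q (l + 1) = q l + p (l + 1) \<and> (\<exists>t. Tprop l t)"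
    using run unfolding PLT_run_def Let_def Tprop_def Rc_def Ys_def by simp
  then show "1 \<le> p (l+1)" "p (l+1) \<le> Q" "q (l+1) = q l + p (l+1)" using assms by auto
  have "\<exists>t. Tprop l t" using A assms by auto
  then show "Tprop l (Tt l)" unfolding Tt_def by (rule someI_ex)
qed

lemma Tt_props:
  assumes "l \<ge> 1" "k \<in> {1..p (l+1)}"
  shows "Tt l k \<in> {2..q l}" "Tt l k \<notin> Tt l ` {1..<k}"
    "\<And>i. i \<in> {2..q l} \<Longrightarrow> i \<notin> Tt l ` {1..<k} \<Longrightarrow> Rc l i \<le> Rc l (Tt l k)"
    "xs (q l + k) = newpt f N r \<xi> (Ys l) (Tt l k)"
  using run_step(4)[OF assms(1)] assms(2) unfolding Tprop_def by auto

lemma Tt_inj: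
  assumes l: "l \<ge> 1" shows "inj_on (Tt l) {1..p (l+1)}"
proof (rule inj_onI, rule ccontr)
  fix k1 k2 assume k: "k1 \<in> {1..p (l+1)}" "k2 \<in> {1..p (l+1)}" "Tt l k1 = Tt l k2" "k1 \<noteq> k2"
  then consider "k1 < k2" | "k2 < k1" by linarith
  then show False
  proof cases
    case 1
    then have "Tt l k1 \<in> Tt l ` {1..<k2}" using k(1) by auto
    then show False using Tt_props(2)[OF l k(2)] k(3) by simp
  next
    case 2
    then have "Tt l k2 \<in> Tt l ` {1..<k1}" using k(2) by auto
    then show False using Tt_props(2)[OF l k(1)] k(3) by simp
  qed
qed

lemma q_step: "l \<ge> 1 \<Longrightarrow> q l < q (l+1)"
  using run_step(1,3) by fastforce

lemma q_mono:
  assumes "1 \<le> l" "l \<le> l'" shows "q l \<le> q l'"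
  using assms(2)
proof (induction l' rule: dec_induct)
  case (step m) then show ?case using q_step[of m] assms(1) by simp
qed simp

lemma q_ge: "l \<ge> 1 \<Longrightarrow> q l \<ge> l + 1"
  by (induction l rule: nat_induct_at_least) (use run_start(1) q_step in force)+

lemma sorted_facts:
  assumes inj: "inj_on xs {1..q l}"
  shows "length (Ys l) = q l"
    and "\<And>i j. 1 \<le> i \<Longrightarrow> i < j \<Longrightarrow> j \<le> q l \<Longrightarrow> pt (Ys l) i < pt (Ys l) j"
    and "\<And>i. 1 \<le> i \<Longrightarrow> i \<le> q l \<Longrightarrow> pt (Ys l) i \<in> St l"
    and "\<And>s. s \<in> St l \<Longrightarrow> \<exists>i. 1 \<le> i \<and> i \<le> q l \<and> pt (Ys l) i = s"
proof -
  have fin: "finite (St l)" unfolding St_def by simp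
  have card: "card (St l) = q l" unfolding St_def using card_image[OF inj] by simp
  have ys: "Ys l = sorted_list_of_set (St l)" unfolding Ys_def sorted_trials_def St_def by simp
  show "length (Ys l) = q l"
    and "\<And>i j. 1 \<le> i \<Longrightarrow> i < j \<Longrightarrow> j \<le> q l \<Longrightarrow> pt (Ys l) i < pt (Ys l) j"
    and "\<And>i. 1 \<le> i \<Longrightarrow> i \<le> q l \<Longrightarrow> pt (Ys l) i \<in> St l"
    and "\<And>s. s \<in> St l \<Longrightarrow> \<exists>i. 1 \<le> i \<and> i \<le> q l \<and> pt (Ys l) i = s"
    using sorted_list_pt[OF fin] card ys by simp_all
qed

lemma pt_mono:
  assumes inj: "inj_on xs {1..q l}" and "1 \<le> i" "i \<le> j" "j \<le> q l"
  shows "pt (Ys l) i \<le> pt (Ys l) j"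
  using sorted_facts(2)[OF inj, of i j] assms by (cases "i = j") auto

lemma pt_inj:
  assumes inj: "inj_on xs {1..q l}"
  shows "inj_on (pt (Ys l)) {1..q l}"
proof (rule inj_onI, rule ccontr)
  fix i j assume ij: "i \<in> {1..q l}" "j \<in> {1..q l}" "pt (Ys l) i = pt (Ys l) j" "i \<noteq> j"
  then consider "i < j" | "j < i" by linarith
  then show False using sorted_facts(2)[OF inj, of i j] sorted_facts(2)[OF inj, of j i] ij by cases auto
qed

lemma gap:
  assumes inj: "inj_on xs {1..q l}" and i: "2 \<le> i" "i \<le> q l" and s: "s \<in> St l"
  shows "\<not> (pt (Ys l) (i - 1) < s \<and> s < pt (Ys l) i)"
proof
  assume H: "pt (Ys l) (i - 1) < s \<and> s < pt (Ys l) i"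
  obtain m where m: "1 \<le> m" "m \<le> q l" "pt (Ys l) m = s" using sorted_facts(4)[OF inj s] by blast
  show False
  proof (cases "m \<le> i - 1")
    case True
    then have "pt (Ys l) m \<le> pt (Ys l) (i - 1)" using pt_mono[OF inj, of m "i - 1"] m i by simp
    then show False using H m by simp
  next
    case False
    then have "pt (Ys l) i \<le> pt (Ys l) m" using pt_mono[OF inj, of i m] m i by simp
    then show False using H m by simp
  qed
qed

lemma new_in_gap:
  assumes l: "l \<ge> 1" and inj: "inj_on xs {1..q l}" and k: "k \<in> {1..p (l+1)}"
  shows "Tt l k \<in> {2..q l}" "lo l k \<in> St l" "hi l k \<in> St l" "lo l k < hi l k"
    "lo l k + \<alpha> * (hi l k - lo l k) \<le> xs (q l + k)"
    "xs (q l + k) \<le> hi l k - \<alpha> * (hi l k - lo l k)"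
    "lo l k < xs (q l + k)" "xs (q l + k) < hi l k"
proof -
  have t: "Tt l k \<in> {2..q l}" using Tt_props(1)[OF l k] .
  then show "Tt l k \<in> {2..q l}" .
  show "lo l k \<in> St l" "hi l k \<in> St l"
    unfolding lo_def hi_def using sorted_facts(3)[OF inj] t by auto
  show ab: "lo l k < hi l k" unfolding lo_def hi_def
    using sorted_facts(2)[OF inj, of "Tt l k - 1" "Tt l k"] t by auto
  have t2: "2 \<le> Tt l k" "Tt l k \<le> length (Ys l)" using t sorted_facts(1)[OF inj] by auto
  show m1: "lo l k + \<alpha> * (hi l k - lo l k) \<le> xs (q l + k)"
    and m2: "xs (q l + k) \<le> hi l k - \<alpha> * (hi l k - lo l k)"
    using newpt_inside[OF t2 ab[unfolded lo_def hi_def] xi r N, of f] Tt_props(4)[OF l k]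
    unfolding \<alpha>_def lo_def hi_def by simp_all
  have "0 < \<alpha> * (hi l k - lo l k)" using alpha_pos ab by simp
  then show "lo l k < xs (q l + k)" "xs (q l + k) < hi l k" using m1 m2 by linarith+
qed

lemma new_point_fresh:
  assumes l: "l \<ge> 1" and inj: "inj_on xs {1..q l}" and k: "k \<in> {1..p (l+1)}"
  shows "xs (q l + k) \<notin> St l"
  using gap[OF inj, of "Tt l k" "xs (q l + k)"] new_in_gap(1,7,8)[OF l inj k]
  unfolding lo_def hi_def by auto

lemma new_points_inj:
  assumes l: "l \<ge> 1" and inj: "inj_on xs {1..q l}"
  shows "inj_on (\<lambda>k. xs (q l + k)) {1..p (l+1)}"
proof (rule inj_onI)
  have ordered: "xs (q l + k1) < xs (q l + k2)"
    if k: "k1 \<in> {1..p (l+1)}" "k2 \<in> {1..p (l+1)}" and lt: "Tt l k1 < Tt l k2" for k1 k2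
  proof -
    have "hi l k1 \<le> lo l k2" unfolding hi_def lo_def
      using pt_mono[OF inj, of "Tt l k1" "Tt l k2 - 1"] lt new_in_gap(1)[OF l inj k(1)]
        new_in_gap(1)[OF l inj k(2)] by auto
    then show ?thesis using new_in_gap(7,8)[OF l inj k(1)] new_in_gap(7,8)[OF l inj k(2)] by linarith
  qed
  fix k1 k2 assume k: "k1 \<in> {1..p (l+1)}" "k2 \<in> {1..p (l+1)}" and eq: "xs (q l + k1) = xs (q l + k2)"
  then have "Tt l k1 = Tt l k2" using ordered[OF k] ordered[OF k(2,1)] by fastforce
  then show "k1 = k2" using Tt_inj[OF l] k by (auto dest: inj_onD)
qed

lemma trials_distinct_in_unit:
  "l \<ge> 1 \<Longrightarrow> inj_on xs {1..q l} \<and> St l \<subseteq> {0..1}"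
proof (induction l rule: nat_induct_at_least)
  case base
  have "xs k \<in> {0..1}" if "k \<in> {1..q 1}" for k
  proof -
    have "k = 1 \<or> k = 2 \<or> k \<in> {3..q 1}" using that by auto
    then show ?thesis using run_start(2,3) run_start(4)[rule_format, of k] by auto
  qed
  then show ?case using run_start(5) unfolding St_def by auto
next
  case (Suc l)
  have l: "l \<ge> 1" and inj: "inj_on xs {1..q l}" and rng: "St l \<subseteq> {0..1}" using Suc by auto
  let ?new = "(\<lambda>k. q l + k) ` {1..p (l+1)}"
  have split: "{1..q (Suc l)} = {1..q l} \<union> ?new"
    using run_step(3)[OF l] by (auto simp: image_iff intro!: exI[of _ "_ - q l"])
  have "inj_on xs ?new" using new_points_inj[OF l inj] by (intro inj_on_imageI) (simp add: comp_def)
  moreover have "xs ` ?new \<inter> St l = {}" using new_point_fresh[OF l inj] by blast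
  ultimately have "inj_on xs {1..q (Suc l)}"
    unfolding split inj_on_Un using inj unfolding St_def by blast
  moreover have "xs (q l + k) \<in> {0..1}" if k: "k \<in> {1..p (l+1)}" for k
  proof -
    have "lo l k \<in> {0..1}" "hi l k \<in> {0..1}" using new_in_gap(2,3)[OF l inj k] rng by auto
    then show ?thesis using new_in_gap(7,8)[OF l inj k] by auto
  qed
  then have "xs ` ?new \<subseteq> {0..1}" by blast
  moreover have "St (Suc l) = St l \<union> xs ` ?new" unfolding St_def split by blast
  ultimately show ?case using rng by simp
qed

lemma injq: "l \<ge> 1 \<Longrightarrow> inj_on xs {1..q l}"
  using trials_distinct_in_unit by blast

lemma St_unit: "l \<ge> 1 \<Longrightarrow> St l \<subseteq> {0..1}"
  using trials_distinct_in_unit by blast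

lemma trial_in_unit:
  assumes "n \<ge> 1" shows "xs n \<in> {0..1}"
proof -
  have "xs n \<in> St n" unfolding St_def using assms q_ge[OF assms] by auto
  then show ?thesis using St_unit[OF assms] by auto
qed

lemma interval_ends:
  assumes l: "l \<ge> 1" and j: "j \<in> {2..q l}"
  shows "pt (Ys l) (j - 1) < pt (Ys l) j" "pt (Ys l) (j - 1) \<in> St l" "pt (Ys l) j \<in> St l"
    "pt (Ys l) (j - 1) \<in> {0..1}" "pt (Ys l) j \<in> {0..1}"
proof -
  show "pt (Ys l) (j - 1) < pt (Ys l) j" using sorted_facts(2)[OF injq[OF l], of "j - 1" j] j by auto
  show ends: "pt (Ys l) (j - 1) \<in> St l" "pt (Ys l) j \<in> St l" using sorted_facts(3)[OF injq[OF l]] j by auto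
  show "pt (Ys l) (j - 1) \<in> {0..1}" "pt (Ys l) j \<in> {0..1}" using ends St_unit[OF l] by auto
qed

lemma trial_origin:
  assumes L: "L \<ge> 1" and n: "q L < n"
  obtains l k where "L \<le> l" "k \<in> {1..p (l+1)}" "n = q l + k"
proof -
  have "L \<le> n" "n \<le> q n" using q_ge[OF L] q_ge[of n] n L by auto
  then obtain l where "L \<le> l" "q l < n" "n \<le> q (Suc l)"
    using crossing_index[of L n q n] n by blast
  then show ?thesis using that[of l "n - q l"] run_step(3)[of l] L by auto
qed


subsection \<open>Selected intervals eventually become short\<close>

definition "long_iterations \<eta> = {l. l \<ge> 1 \<and> (\<exists>k \<in> {1..p (l+1)}. \<eta> \<le> hi l k - lo l k)}"

text \<open>A wide interval selected at iteration \<open>l\<^sub>1\<close> is split by a trial at distance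
  \<open>\<ge> \<alpha> \<eta>\<close> from its ends, so no later selected interval can have both end points
  within \<open>\<alpha> \<eta>\<close> of those of the earlier one.\<close>
lemma wide_selections_separated:
  assumes l1: "l1 \<ge> 1" "k1 \<in> {1..p (l1+1)}" "\<eta> \<le> hi l1 k1 - lo l1 k1"
    and l2: "l1 < l2" "k2 \<in> {1..p (l2+1)}"
    and close: "\<bar>lo l1 k1 - lo l2 k2\<bar> < \<alpha> * \<eta>" "\<bar>hi l1 k1 - hi l2 k2\<bar> < \<alpha> * \<eta>"
  shows False
proof -
  define y where "y = xs (q l1 + k1)"
  have "\<alpha> * \<eta> \<le> \<alpha> * (hi l1 k1 - lo l1 k1)" using l1(3) alpha_pos by simp
  then have "lo l2 k2 < y" "y < hi l2 k2"
    using new_in_gap(5,6)[OF l1(1) injq[OF l1(1)] l1(2)] close unfolding y_def by linarith+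
  moreover have "q l1 + k1 \<le> q l2"
    using run_step(3)[OF l1(1)] l1(2) q_mono[of "l1 + 1" l2] l2(1) by simp
  then have "y \<in> St l2" unfolding y_def St_def using l1(2) by auto
  ultimately show False
    using gap[OF injq, of l2 "Tt l2 k2" y] new_in_gap(1)[OF _ injq l2(2)] l1(1) l2(1)
    unfolding lo_def hi_def by auto
qed

text \<open>Pigeonhole on grid cells of mesh \<open>\<alpha> \<eta>\<close> of the end points.\<close>
lemma long_iterations_finite:
  assumes eta: "\<eta> > 0"
  shows "finite (long_iterations \<eta>)"
proof (rule ccontr)
  let ?L = "long_iterations \<eta>"
  assume inf: "infinite ?L"
  define kk where "kk l = (SOME k. k \<in> {1..p (l+1)} \<and> \<eta> \<le> hi l k - lo l k)" for l
  have kk: "l \<ge> 1 \<and> kk l \<in> {1..p (l+1)} \<and> \<eta> \<le> hi l (kk l) - lo l (kk l)" if "l \<in> ?L" for l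
  proof -
    have "l \<ge> 1" "\<exists>k. k \<in> {1..p (l+1)} \<and> \<eta> \<le> hi l k - lo l k"
      using that unfolding long_iterations_def by auto
    then show ?thesis unfolding kk_def by (metis (mono_tags, lifting) someI_ex)
  qed
  define h where "h = \<alpha> * \<eta>"
  have hp: "h > 0" unfolding h_def using alpha_pos eta by simp
  define cell where "cell l = (\<lfloor>lo l (kk l) / h\<rfloor>, \<lfloor>hi l (kk l) / h\<rfloor>)" for l
  have "cell ` ?L \<subseteq> {0..\<lfloor>1/h\<rfloor>} \<times> {0..\<lfloor>1/h\<rfloor>}"
  proof
    fix z assume "z \<in> cell ` ?L"
    then obtain l where l: "l \<in> ?L" "z = cell l" by auto
    have "lo l (kk l) \<in> {0..1}" "hi l (kk l) \<in> {0..1}"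
      using new_in_gap(2,3)[OF _ injq] St_unit kk[OF l(1)] by blast+
    then show "z \<in> {0..\<lfloor>1/h\<rfloor>} \<times> {0..\<lfloor>1/h\<rfloor>}"
      unfolding l(2) cell_def using hp by (auto intro!: floor_mono divide_right_mono)
  qed
  then have "finite (cell ` ?L)" by (rule finite_subset) simp
  then obtain l1 l2 where l12: "l1 \<in> ?L" "l2 \<in> ?L" "l1 < l2" "cell l1 = cell l2"
    using inf finite_imageD unfolding inj_on_def by (metis linorder_neqE_nat)
  then have "\<bar>lo l1 (kk l1) - lo l2 (kk l2)\<bar> < h" "\<bar>hi l1 (kk l1) - hi l2 (kk l2)\<bar> < h"
    using floor_eq_close[OF _ hp] unfolding cell_def by auto
  then show False
    using wide_selections_separated kk[OF l12(1)] kk[OF l12(2)] l12(3) unfolding h_def by blast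
qed

lemma eventually_short:
  assumes "\<eta> > 0"
  obtains L where "\<And>l k. L \<le> l \<Longrightarrow> k \<in> {1..p (l+1)} \<Longrightarrow> hi l k - lo l k < \<eta>"
proof -
  obtain M where M: "\<forall>l \<in> long_iterations \<eta>. l \<le> M"
    using long_iterations_finite[OF assms] finite_nat_set_iff_bounded_le by blast
  have "hi l k - lo l k < \<eta>" if "M + 1 \<le> l" "k \<in> {1..p (l+1)}" for l k
  proof (rule ccontr)
    assume "\<not> hi l k - lo l k < \<eta>"
    then have "l \<in> long_iterations \<eta>" unfolding long_iterations_def using that by force
    then show False using M that by fastforce
  qed
  then show ?thesis by (rule that)
qed


subsection \<open>Characteristics along the run\<close>

lemma slope_le_H:
  assumes l: "l \<ge> 1" and i: "i \<in> {2..length (Ys l)}"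
  shows "slope f N (Ys l) i \<le> H"
proof -
  have "i \<in> {2..q l}" using i sorted_facts(1)[OF injq[OF l]] by simp
  note ends = interval_ends[OF l this]
  define a where "a = pt (Ys l) (i - 1)"
  define b where "b = pt (Ys l) i"
  have ab: "a < b" and "a \<in> {0..1}" "b \<in> {0..1}" unfolding a_def b_def using ends by auto
  then have "\<bar>f b - f a\<bar> \<le> H * \<bar>b - a\<bar> powr (1 / real N)" using hoelder by blast
  then show ?thesis unfolding slope_def a_def[symmetric] b_def[symmetric] using ab
    by (simp add: pos_divide_le_eq)
qed

lemma Rc_bounds:
  assumes l: "l \<ge> 1" and t: "t \<in> {2..q l}"
  shows "-2 * f (pt (Ys l) t) \<le> Rc l t"
    and "Rc l t \<le> 2 * r * mu_bound * (pt (Ys l) t - pt (Ys l) (t - 1)) powr (1 / real N)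
           - f (pt (Ys l) t) - f (pt (Ys l) (t - 1))"
proof -
  have inj: "inj_on xs {1..q l}" using injq[OF l] .
  have t2: "2 \<le> t" "t \<le> length (Ys l)" using t sorted_facts(1)[OF inj] by auto
  have inc: "\<forall>i \<in> {2..length (Ys l)}. pt (Ys l) (i - 1) < pt (Ys l) i"
    using sorted_facts(1,2)[OF inj] by auto
  then have ab: "pt (Ys l) (t - 1) < pt (Ys l) t" using t2 by auto
  have "muj f N \<xi> (Ys l) t \<le> mu_bound"
    using muj_le_max[OF t2 _ inc] slope_le_H[OF l] unfolding mu_bound_def by blast
  then have "2 * r * muj f N \<xi> (Ys l) t * (pt (Ys l) t - pt (Ys l) (t - 1)) powr (1 / real N)
      \<le> 2 * r * mu_bound * (pt (Ys l) t - pt (Ys l) (t - 1)) powr (1 / real N)"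
    using r by (intro mult_right_mono mult_left_mono) auto
  then show "-2 * f (pt (Ys l) t) \<le> Rc l t"
    and "Rc l t \<le> 2 * r * mu_bound * (pt (Ys l) t - pt (Ys l) (t - 1)) powr (1 / real N)
           - f (pt (Ys l) t) - f (pt (Ys l) (t - 1))"
    using charR_bounds[OF t2 ab xi r, of f N] unfolding Rc_def by linarith+
qed

lemma selected_width_lower:
  assumes l: "l \<ge> 1" and k: "k \<in> {1..p (l+1)}" and \<beta>: "\<beta> > 0"
    and ends: "c \<le> f (lo l k)" "c \<le> f (hi l k)" and R: "-2 * c + \<beta> \<le> Rc l (Tt l k)"
  shows "(\<beta> / (2 * r * mu_bound)) powr real N \<le> hi l k - lo l k"
proof -
  have "\<beta> \<le> 2 * r * mu_bound * (hi l k - lo l k) powr (1 / real N)"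
    using Rc_bounds(2)[OF l new_in_gap(1)[OF l injq[OF l] k]] ends R unfolding lo_def hi_def by linarith
  then have "\<beta> / (2 * r * mu_bound) \<le> (hi l k - lo l k) powr (1 / real N)"
    using r mu_bound_pos by (simp add: divide_le_eq mult.commute)
  moreover have "0 < \<beta> / (2 * r * mu_bound)" using \<beta> r mu_bound_pos by simp
  moreover have "0 < hi l k - lo l k" using new_in_gap(4)[OF l injq[OF l] k] by simp
  ultimately show ?thesis using le_powr_root[OF N] by blast
qed

text \<open>If \<open>Q + 1\<close> trials have values at most \<open>c\<close>, then from the iteration containing them
  on, every selected characteristic is at least \<open>-2c\<close>: at most \<open>Q - 1\<close> intervals are
  selected before the \<open>k\<close>-th one, so an interval ending at one of these trials is still
  available, and its characteristic is at least \<open>-2c\<close>.\<close>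
lemma selected_char_lower:
  assumes B: "finite B" "card B = Q + 1" "B \<subseteq> {1..}" and fB: "\<forall>n \<in> B. f (xs n) \<le> c"
    and l: "Max B \<le> l" and k: "k \<in> {1..p (l+1)}"
  shows "-2 * c \<le> Rc l (Tt l k)"
proof -
  have "B \<noteq> {}" using B(2) by auto
  then have "1 \<le> Max B" using Max_in[OF B(1)] B(3) by auto
  then have l1: "l \<ge> 1" using l by simp
  have inj: "inj_on xs {1..q l}" using injq[OF l1] .
  have Bq: "B \<subseteq> {1..q l}"
  proof
    fix n assume "n \<in> B"
    then have "1 \<le> n" "n \<le> Max B" using B by auto
    then show "n \<in> {1..q l}" using l q_ge[OF l1] by simp
  qed
  define P where "P = {i \<in> {1..q l}. pt (Ys l) i \<in> xs ` B}"
  have img: "pt (Ys l) ` P = xs ` B"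
  proof
    show "pt (Ys l) ` P \<subseteq> xs ` B" unfolding P_def by auto
    show "xs ` B \<subseteq> pt (Ys l) ` P"
    proof
      fix s assume s: "s \<in> xs ` B"
      then have "s \<in> St l" using Bq unfolding St_def by auto
      then obtain i where "1 \<le> i" "i \<le> q l" "pt (Ys l) i = s" using sorted_facts(4)[OF inj] by blast
      then show "s \<in> pt (Ys l) ` P" unfolding P_def using s by force
    qed
  qed
  have "P \<subseteq> {1..q l}" unfolding P_def by auto
  then have "card P = card (pt (Ys l) ` P)" using card_image[OF inj_on_subset[OF pt_inj[OF inj]]] by simp
  also have "\<dots> = card B" unfolding img using card_image[OF inj_on_subset[OF inj Bq]] .
  finally have "card (P - {1}) \<ge> Q" using B(2) by (simp add: card_Diff_singleton_if)
  moreover have "card (Tt l ` {1..<k}) < Q"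
    using card_image_le[of "{1..<k}" "Tt l"] run_step(2)[OF l1] k by simp linarith
  ultimately have "\<not> P - {1} \<subseteq> Tt l ` {1..<k}"
    using card_mono[of "Tt l ` {1..<k}" "P - {1}"] by auto
  then obtain i where i: "i \<in> P - {1}" "i \<notin> Tt l ` {1..<k}" by blast
  then have iq: "i \<in> {2..q l}" unfolding P_def by auto
  obtain n where "n \<in> B" "pt (Ys l) i = xs n" using i unfolding P_def by auto
  then have "-2 * c \<le> -2 * f (pt (Ys l) i)" using fB by simp
  also have "\<dots> \<le> Rc l i" using Rc_bounds(1)[OF l1 iq] .
  also have "\<dots> \<le> Rc l (Tt l k)" using Tt_props(3)[OF l1 k iq i(2)] .
  finally show ?thesis .
qed


subsection \<open>The two inclusions\<close>

lemma theorem2_iterations: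
  assumes xm: "xstar \<in> global_minimizers f" and cond: "theorem2_condition f N r \<xi> xs q xstar"
  obtains Hs where "infinite Hs"
    and "\<And>l. l \<in> Hs \<Longrightarrow> l \<ge> 1 \<and> (\<exists>j \<in> {2..q l}. pt (Ys l) (j - 1) \<le> xstar \<and> xstar \<le> pt (Ys l) j \<and>
           -2 * f xstar + r * \<xi> / 2 * (pt (Ys l) j - pt (Ys l) (j - 1)) powr (1 / real N) \<le> Rc l j)"
proof -
  have fmin: "\<And>y. y \<in> {0..1} \<Longrightarrow> f xstar \<le> f y" using xm unfolding global_minimizers_def by auto
  obtain Hs where Hs: "infinite Hs" and HsP: "\<forall>l \<in> Hs. l \<ge> 1 \<and>
      (\<exists>j \<in> {2..q l}. pt (Ys l) (j - 1) \<le> xstar \<and> xstar \<le> pt (Ys l) j \<and>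
        4 powr (1 - 1 / real N) * (Kj f N (Ys l) xstar j)\<^sup>2 \<ge> (Mj f N (Ys l) j)\<^sup>2 \<and>
        r * muj f N \<xi> (Ys l) j \<ge> 2 powr (1 - 1 / real N) * Kj f N (Ys l) xstar j
          + sqrt (4 powr (1 - 1 / real N) * (Kj f N (Ys l) xstar j)\<^sup>2 - (Mj f N (Ys l) j)\<^sup>2))"
    using cond unfolding theorem2_condition_def Let_def Ys_def by blast
  have "l \<ge> 1 \<and> (\<exists>j \<in> {2..q l}. pt (Ys l) (j - 1) \<le> xstar \<and> xstar \<le> pt (Ys l) j \<and>
           -2 * f xstar + r * \<xi> / 2 * (pt (Ys l) j - pt (Ys l) (j - 1)) powr (1 / real N) \<le> Rc l j)"
    if "l \<in> Hs" for l
  proof -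
    obtain j where l: "l \<ge> 1" and j: "j \<in> {2..q l}"
      and x: "pt (Ys l) (j - 1) \<le> xstar" "xstar \<le> pt (Ys l) j"
      and disc: "(Mj f N (Ys l) j)\<^sup>2 \<le> 4 powr (1 - 1 / real N) * (Kj f N (Ys l) xstar j)\<^sup>2"
      and big: "2 powr (1 - 1 / real N) * Kj f N (Ys l) xstar j
          + sqrt (4 powr (1 - 1 / real N) * (Kj f N (Ys l) xstar j)\<^sup>2 - (Mj f N (Ys l) j)\<^sup>2)
          \<le> r * muj f N \<xi> (Ys l) j"
      using HsP \<open>l \<in> Hs\<close> by blast
    have "-2 * f xstar + r * \<xi> / 2 * (pt (Ys l) j - pt (Ys l) (j - 1)) powr (1 / real N) \<le> Rc l j"
      unfolding Rc_def using r interval_ends[OF l j] fmin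
      by (intro charR_ge_at_minimizer[OF N _ xi _ x _ _ disc big]) auto
    then show ?thesis using l j x by blast
  qed
  then show ?thesis using that Hs by blast
qed

text \<open>First inclusion: a minimiser satisfying the condition of Theorem 2 is a limit
  point.  Were it isolated from the trials by \<open>\<epsilon>\<close>, the interval around it would have
  width \<open>\<ge> \<epsilon>\<close> at infinitely many iterations, and then by estimates (a), (b) the first
  selected interval would have width bounded below, contradicting (c).\<close>
lemma minimizer_is_limit_point:
  assumes xm: "xstar \<in> global_minimizers f" and cond: "theorem2_condition f N r \<xi> xs q xstar"
  shows "xstar \<in> limit_points xs"
proof -
  have fmin: "\<And>y. y \<in> {0..1} \<Longrightarrow> f xstar \<le> f y" using xm unfolding global_minimizers_def by auto
  obtain Hs where Hs: "infinite Hs" and HsP: "\<And>l. l \<in> Hs \<Longrightarrow> l \<ge> 1 \<and>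
      (\<exists>j \<in> {2..q l}. pt (Ys l) (j - 1) \<le> xstar \<and> xstar \<le> pt (Ys l) j \<and>
        -2 * f xstar + r * \<xi> / 2 * (pt (Ys l) j - pt (Ys l) (j - 1)) powr (1 / real N) \<le> Rc l j)"
    using theorem2_iterations[OF xm cond] by blast
  have "xstar islimpt (range xs)"
  proof (rule ccontr)
    assume "\<not> xstar islimpt (range xs)"
    then obtain \<epsilon> where ep: "\<epsilon> > 0" and far: "\<And>n. xs n \<noteq> xstar \<Longrightarrow> \<epsilon> \<le> \<bar>xs n - xstar\<bar>"
      unfolding islimpt_approachable dist_real_def by force
    define \<beta> where "\<beta> = r * \<xi> / 2 * \<epsilon> powr (1 / real N)"
    have \<beta>: "\<beta> > 0" unfolding \<beta>_def using r xi ep by simp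
    have "0 < (\<beta> / (2 * r * mu_bound)) powr real N" using \<beta> r mu_bound_pos by simp
    then obtain L where short: "\<And>l k. L \<le> l \<Longrightarrow> k \<in> {1..p (l+1)} \<Longrightarrow>
        hi l k - lo l k < (\<beta> / (2 * r * mu_bound)) powr real N"
      using eventually_short by blast
    have "\<not> Hs \<subseteq> {..<L}" using Hs finite_subset by blast
    then obtain l where lH: "l \<in> Hs" and "\<not> l < L" by blast
    then have lL: "L \<le> l" by simp
    obtain j where l: "l \<ge> 1" and j: "j \<in> {2..q l}"
      and x: "pt (Ys l) (j - 1) \<le> xstar" "xstar \<le> pt (Ys l) j"
      and Rj: "-2 * f xstar + r * \<xi> / 2 * (pt (Ys l) j - pt (Ys l) (j - 1)) powr (1 / real N) \<le> Rc l j"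
      using HsP[OF lH] by blast
    note ends = interval_ends[OF l j]
    have farS: "\<epsilon> \<le> \<bar>s - xstar\<bar>" if "s \<in> St l" "s \<noteq> xstar" for s
      using that far unfolding St_def by auto
    have "\<epsilon> \<le> pt (Ys l) j - pt (Ys l) (j - 1)"
    proof (cases "pt (Ys l) (j - 1) = xstar")
      case True
      then show ?thesis using farS[OF ends(3)] ends(1) by auto
    next
      case False
      then show ?thesis using farS[OF ends(2)] x by auto
    qed
    then have "\<beta> \<le> r * \<xi> / 2 * (pt (Ys l) j - pt (Ys l) (j - 1)) powr (1 / real N)"
      unfolding \<beta>_def using ep r xi by (intro mult_left_mono powr_mono2) auto
    moreover have k1: "1 \<in> {1..p (l+1)}" using run_step(1)[OF l] by simp
    moreover have "Rc l j \<le> Rc l (Tt l 1)" using Tt_props(3)[OF l k1 j] by simp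
    ultimately have "-2 * f xstar + \<beta> \<le> Rc l (Tt l 1)" using Rj by linarith
    moreover have "f xstar \<le> f (lo l 1)" "f xstar \<le> f (hi l 1)"
      using new_in_gap(2,3)[OF l injq[OF l] k1] St_unit[OF l] fmin by auto
    ultimately have "(\<beta> / (2 * r * mu_bound)) powr real N \<le> hi l 1 - lo l 1"
      using selected_width_lower[OF l k1 \<beta>] by blast
    then show False using short[OF lL k1] by simp
  qed
  then show ?thesis unfolding limit_points_def using islimpt_range_imp_convergent_subsequence by blast
qed

text \<open>Second inclusion: once some minimiser is a limit point, every limit point \<open>x'\<close>
  is a minimiser.  Otherwise \<open>\<delta> = f(x') - f(x\<^sup>*) > 0\<close>; after \<open>Q + 1\<close> trials with values
  below \<open>f(x\<^sup>*) + \<delta>/4\<close> every selected characteristic is at least \<open>-2 f(x\<^sup>*) - \<delta>/2\<close>, so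
  an interval selected near \<open>x'\<close> has width bounded below, and by (c) only finitely
  many trials can fall near \<open>x'\<close>.\<close>
lemma limit_point_is_minimizer:
  assumes lp: "x' \<in> limit_points xs"
    and xm: "xstar \<in> global_minimizers f" and xlp: "xstar \<in> limit_points xs"
  shows "x' \<in> global_minimizers f"
proof (rule ccontr)
  assume notmin: "x' \<notin> global_minimizers f"
  have x01: "x' \<in> {0..1}" using limit_point_in_interval[OF _ lp] trial_in_unit by blast
  have xs01: "xstar \<in> {0..1}" and fmin: "\<And>y. y \<in> {0..1} \<Longrightarrow> f xstar \<le> f y"
    using xm unfolding global_minimizers_def by auto
  define \<delta> where "\<delta> = f x' - f xstar"
  obtain y where "y \<in> {0..1}" "f y < f x'" using notmin x01 unfolding global_minimizers_def by force
  then have dp: "\<delta> > 0" using fmin[of y] unfolding \<delta>_def by simp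
  obtain \<rho> where rp: "\<rho> > 0"
    and U: "\<forall>x \<in> {0..1}. \<forall>z \<in> {0..1}. \<bar>x - z\<bar> < \<rho> \<longrightarrow> \<bar>f x - f z\<bar> \<le> \<delta> / 4"
    using hoelder_uniform[OF N _ hoelder, of "\<delta> / 4"] dp by auto
  have "infinite ({n. \<bar>xs n - xstar\<bar> < \<rho>} - {0})"
    using limit_point_infinitely_often[OF xlp rp] by simp
  then obtain B where B: "finite B" "card B = Q + 1" "B \<subseteq> {n. \<bar>xs n - xstar\<bar> < \<rho>} - {0}"
    using infinite_arbitrarily_large by blast
  have B1: "B \<subseteq> {1..}" using B(3) by auto
  have fB: "\<forall>n \<in> B. f (xs n) \<le> f xstar + \<delta> / 4"
  proof
    fix n assume "n \<in> B"
    then have n: "n \<ge> 1" and "\<bar>xs n - xstar\<bar> < \<rho>" using B(3) by auto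
    moreover have "xs n \<in> {0..1}" using trial_in_unit[OF n] .
    ultimately have "\<bar>f (xs n) - f xstar\<bar> \<le> \<delta> / 4" using U xs01 by blast
    then show "f (xs n) \<le> f xstar + \<delta> / 4" by linarith
  qed
  define \<eta> where "\<eta> = min (\<rho> / 2) ((\<delta> / (2 * r * mu_bound)) powr real N)"
  have etap: "\<eta> > 0" unfolding \<eta>_def using rp dp r mu_bound_pos by simp
  obtain L2 where short: "\<And>l k. L2 \<le> l \<Longrightarrow> k \<in> {1..p (l+1)} \<Longrightarrow> hi l k - lo l k < \<eta>"
    using eventually_short[OF etap] by blast
  define L where "L = max 1 (max (Max B) L2)"
  have "{n. \<bar>xs n - x'\<bar> < \<rho> / 2} \<subseteq> {..q L}"
  proof (rule subsetI, rule ccontr)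
    fix n assume "n \<in> {n. \<bar>xs n - x'\<bar> < \<rho> / 2}" "n \<notin> {..q L}"
    then have near: "\<bar>xs n - x'\<bar> < \<rho> / 2" and nL: "q L < n" by auto
    obtain l k where lL: "L \<le> l" and k: "k \<in> {1..p (l+1)}" and nk: "n = q l + k"
      using trial_origin[OF _ nL] unfolding L_def by auto
    have l: "l \<ge> 1" using lL unfolding L_def by simp
    note sel = new_in_gap[OF l injq[OF l] k]
    have w: "hi l k - lo l k < \<eta>" using short[OF _ k] lL unfolding L_def by simp
    have inside: "lo l k \<le> xs n" "xs n \<le> hi l k" using sel(7,8) unfolding nk by auto
    have "\<eta> \<le> \<rho> / 2" unfolding \<eta>_def by simp
    then have "\<bar>lo l k - x'\<bar> < \<rho>" and "\<bar>hi l k - x'\<bar> < \<rho>"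
      using w inside near by linarith+
    moreover have "lo l k \<in> {0..1}" "hi l k \<in> {0..1}" using sel(2,3) St_unit[OF l] by auto
    ultimately have "\<bar>f (lo l k) - f x'\<bar> \<le> \<delta> / 4" "\<bar>f (hi l k) - f x'\<bar> \<le> \<delta> / 4"
      using U x01 by blast+
    then have ends: "f x' - \<delta> / 4 \<le> f (lo l k)" "f x' - \<delta> / 4 \<le> f (hi l k)" by linarith+
    have "-2 * (f xstar + \<delta> / 4) \<le> Rc l (Tt l k)"
      using selected_char_lower[OF B(1,2) B1 fB _ k] lL unfolding L_def by simp
    then have "-2 * (f x' - \<delta> / 4) + \<delta> \<le> Rc l (Tt l k)" unfolding \<delta>_def by (simp add: field_simps)
    then have "(\<delta> / (2 * r * mu_bound)) powr real N \<le> hi l k - lo l k"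
      using selected_width_lower[OF l k dp ends] by blast
    then show False using w unfolding \<eta>_def by simp
  qed
  then show False using limit_point_infinitely_often[OF lp, of "\<rho> / 2"] rp
    using finite_subset by auto
qed

end


theorem corollary2:
  fixes f :: "real \<Rightarrow> real" and N Q :: nat and r \<xi> H :: real
    and xs :: "nat \<Rightarrow> real" and q p :: "nat \<Rightarrow> nat"
  assumes N: "N \<ge> 1" and r: "r > 1" and xi: "\<xi> > 0"
    and hoelder: "\<forall>x' \<in> {0..1}. \<forall>x'' \<in> {0..1}.
                    \<bar>f x' - f x''\<bar> \<le> H * \<bar>x' - x''\<bar> powr (1 / real N)"
    and run: "PLT_run f N r \<xi> Q xs q p"
    and thm2: "\<forall>xstar \<in> global_minimizers f. \<exists>Hs :: nat set.
                 infinite Hs \<and> (\<forall>l \<in> Hs. l \<ge> 1 \<and>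
                   (let ys = sorted_trials xs (q l) in
                    \<exists>j \<in> {2 .. q l}. pt ys (j - 1) \<le> xstar \<and> xstar \<le> pt ys j \<and>
                      4 powr (1 - 1 / real N) * (Kj f N ys xstar j)\<^sup>2 \<ge> (Mj f N ys j)\<^sup>2 \<and>
                      r * muj f N \<xi> ys j \<ge> 2 powr (1 - 1 / real N) * Kj f N ys xstar j
                        + sqrt (4 powr (1 - 1 / real N) * (Kj f N ys xstar j)\<^sup>2 - (Mj f N ys j)\<^sup>2)))"
  shows "limit_points xs = global_minimizers f"
proof -
  interpret plt_run f N Q r \<xi> H xs q p using N r xi hoelder run by unfold_locales
  have cond: "\<And>x. x \<in> global_minimizers f \<Longrightarrow> theorem2_condition f N r \<xi> xs q x"
    using thm2 unfolding theorem2_condition_def by blast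
  then have minimizers: "global_minimizers f \<subseteq> limit_points xs"
    using minimizer_is_limit_point by blast
  obtain xstar where "xstar \<in> global_minimizers f" using hoelder_minimizer_exists[OF N hoelder] .
  then have "limit_points xs \<subseteq> global_minimizers f"
    using limit_point_is_minimizer minimizers by blast
  with minimizers show ?thesis by blast
qed

end
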